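(* Let $g\ge2$, let $q_i(x,y)=a_ix^2+2b_ixy+c_iy^2$ ($i=1,\ldots,g$) be integer binary quadratic forms, irreducible over the integers, with $a_i\equiv1\pmod4$, and let $D:=\prod_{p\le2g}p\prod_{k}a_kc_k\delta_k\prod_{i<j}\operatorname{Res}(q_i,q_j)$, assumed nonzero. Then for every prime $p$ and all non-negative integers $e_1,\ldots,e_g$, $$\rho^*(p^{e_1},\ldots,p^{e_g})\ll p^{\max(e_1,\ldots,e_g)},$$ with implied constant depending only on the forms; and if $p\nmid D$ then $\rho^*(p^{e_1},\ldots,p^{e_g})=0$ whenever $e_i>0$ and $e_j>0$ for some $i\ne j$.
   Context: $\delta_k$ is the discriminant of $q_k$ and $\operatorname{Res}$ the resultant. For positive integers $d_1,\ldots,d_g$: $\Lambda_{\mathbf d}:=\{\mathbf x\in\mathbb Z^2:d_i\mid q_i(\mathbf x)\ \forall i\}$, $\Lambda^*_{\mathbf d}:=\{\mathbf x\in\Lambda_{\mathbf d}:\gcd(x_1,x_2,d_1\cdots d_g)=1\}$, and $\rho^*(\mathbf d):=\#(\Lambda^*_{\mathbf d}\cap[0,d_1\cdots d_g)^2)$. *)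

theory Defs
  imports "HOL-Computational_Algebra.Computational_Algebra"
begin

definition qf :: "int \<Rightarrow> int \<Rightarrow> int \<Rightarrow> int \<Rightarrow> int \<Rightarrow> int" where
  "qf a b c x y = a * x^2 + 2 * b * x * y + c * y^2"

text \<open>Irreducibility of the form over the integers, via its dehomogenisation
  q(t,1) = a t^2 + 2 b t + c in Z[t] (for a \<noteq> 0 this is equivalent).\<close>
definition form_irreducible :: "int \<Rightarrow> int \<Rightarrow> int \<Rightarrow> bool" where
  "form_irreducible a b c \<longleftrightarrow> irreducible [:c, 2 * b, a:]"

definition disc_form :: "int \<Rightarrow> int \<Rightarrow> int \<Rightarrow> int" where
  "disc_form a b c = (2 * b)^2 - 4 * a * c"

text \<open>Resultant of the binary quadratic forms a1 x^2 + B1 xy + c1 y^2 and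
  a2 x^2 + B2 xy + c2 y^2 (Sylvester determinant), with B = 2 b.\<close>
definition res_form :: "int \<Rightarrow> int \<Rightarrow> int \<Rightarrow> int \<Rightarrow> int \<Rightarrow> int \<Rightarrow> int" where
  "res_form a1 b1 c1 a2 b2 c2 =
     (a1 * c2 - a2 * c1)^2 - (a1 * (2*b2) - a2 * (2*b1)) * ((2*b1) * c2 - (2*b2) * c1)"

definition rho_star :: "nat \<Rightarrow> (nat \<Rightarrow> int) \<Rightarrow> (nat \<Rightarrow> int) \<Rightarrow> (nat \<Rightarrow> int)
    \<Rightarrow> (nat \<Rightarrow> nat) \<Rightarrow> nat" where
  "rho_star g a b c d =
     (let N = int (\<Prod>i<g. d i) in
      card {(x, y) \<in> {0..<N} \<times> {0..<N}.
              (\<forall>i<g. int (d i) dvd qf (a i) (b i) (c i) x y) \<and> gcd (gcd x y) N = 1})"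

definition D_const :: "nat \<Rightarrow> (nat \<Rightarrow> int) \<Rightarrow> (nat \<Rightarrow> int) \<Rightarrow> (nat \<Rightarrow> int) \<Rightarrow> int" where
  "D_const g a b c =
     (\<Prod>p\<in>{p::nat. prime p \<and> p \<le> 2 * g}. int p)
     * (\<Prod>k<g. a k * c k * disc_form (a k) (b k) (c k))
     * (\<Prod>(i, j)\<in>{(i, j). i < j \<and> j < g}.
          res_form (a i) (b i) (c i) (a j) (b j) (c j))"

end

theory Submission
  imports Defs
begin

(* Fix p, let e_j be the largest exponent and N = p^(e_1 + ... + e_g).  Res(q_i, q_j) x^3 and
   Res(q_i, q_j) y^3 are combinations of q_i(x,y) and q_j(x,y), so a common zero of q_i and q_j
   modulo p^k with gcd(x, y, p) = 1 forces p^k | Res(q_i, q_j) | D.  Applied with k = e_i <= e_j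
   this gives p^(e_i) <= |D| for i <> j, hence N <= |D|^(g-1) p^(e_j); and if p does not divide D,
   no two exponents can be positive.  It remains to count the primitive zeros of the single form
   q_j modulo p^(e_j) in [0,N)^2.  For y prime to p, a q(x,y) = (a x + b y)^2 - (b^2 - a c) y^2,
   and the square roots of a fixed D' <> 0 modulo p^n lie in the two classes of +u and -u modulo
   p^(n - v_p(4 D')), so x lies in two residue classes modulo p^(e_j - O(1)).  This gives
   O(N / p^(e_j)) values of x for each y, and O(N^2 / p^(e_j)) = O(|D|^(2g-2) p^(e_j)) points. *)

lemma prime_power_dvd_mult_imp_dvd:
  fixes p a z :: "'a :: factorial_semiring"
  assumes p: "prime p" and a: "a \<noteq> 0" and dvd: "p ^ n dvd a * z"
  shows "p ^ (n - multiplicity p a) dvd z"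
proof (cases "z = 0")
  case False
  have "\<not> is_unit p" using p by auto
  then have "n \<le> multiplicity p (a * z)"
    using dvd a False by (simp add: power_dvd_iff_le_multiplicity)
  also have "\<dots> = multiplicity p a + multiplicity p z"
    using p a False by (simp add: prime_elem_multiplicity_mult_distrib)
  finally show ?thesis
    using \<open>\<not> is_unit p\<close> False by (simp add: power_dvd_iff_le_multiplicity)
qed simp

lemma prime_power_dvd_square_roots:
  fixes p u w \<Delta> :: int
  assumes p: "prime p" and "\<Delta> \<noteq> 0"
    and u: "p ^ n dvd u^2 - \<Delta>" and w: "p ^ n dvd w^2 - \<Delta>"
  defines "s \<equiv> multiplicity p (4 * \<Delta>)"
  shows "p ^ (n - s) dvd u - w \<or> p ^ (n - s) dvd u + w"
proof (rule ccontr)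
  assume "\<not> ?thesis"
  then have ndvd: "\<not> p ^ (n - s) dvd u - w" "\<not> p ^ (n - s) dvd u + w" by auto
  then have nz: "u - w \<noteq> 0" "u + w \<noteq> 0" by auto
  have nunit: "\<not> is_unit p" using p by auto
  define \<alpha> where "\<alpha> = multiplicity p (u - w)"
  define \<beta> where "\<beta> = multiplicity p (u + w)"
  have "\<alpha> < n - s" "\<beta> < n - s"
    using ndvd nz nunit by (auto simp: \<alpha>_def \<beta>_def power_dvd_iff_le_multiplicity)
  moreover have "n \<le> \<alpha> + \<beta>"
  proof -
    have "p ^ n dvd (u^2 - \<Delta>) - (w^2 - \<Delta>)" using u w by (rule dvd_diff)
    also have "(u^2 - \<Delta>) - (w^2 - \<Delta>) = (u - w) * (u + w)"
      by (simp add: algebra_simps power2_eq_square)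
    finally have "p ^ n dvd (u - w) * (u + w)" .
    then have "n \<le> multiplicity p ((u - w) * (u + w))"
      using nz nunit by (simp add: power_dvd_iff_le_multiplicity)
    then show ?thesis
      unfolding \<alpha>_def \<beta>_def
      using prime_elem_multiplicity_mult_distrib[OF prime_imp_prime_elem[OF p] nz] by simp
  qed
  ultimately have ab: "s + 1 \<le> \<alpha>" "s + 1 \<le> \<beta>" and n: "2 * s + 2 \<le> n" by auto
  have "p ^ (s + 1) dvd u - w" "p ^ (s + 1) dvd u + w"
    using ab nz nunit power_dvd_iff_le_multiplicity unfolding \<alpha>_def \<beta>_def by blast+
  then have "p ^ (s + 1) dvd (u - w) + (u + w)" by (rule dvd_add)
  then have "p ^ ((s + 1) * 2) dvd (2 * u)^2" unfolding power_mult by (intro dvd_power_same) simp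
  then have "p ^ (2 * s + 2) dvd 4 * u^2" by (simp add: power_mult_distrib mult.commute)
  moreover have "p ^ (2 * s + 2) dvd 4 * (u^2 - \<Delta>)"
    using u n by (intro dvd_mult) (rule dvd_trans[OF le_imp_power_dvd])
  ultimately have "p ^ (2 * s + 2) dvd 4 * u^2 - 4 * (u^2 - \<Delta>)" by (rule dvd_diff)
  then have "p ^ (2 * s + 2) dvd 4 * \<Delta>" by simp
  then have "p ^ (s + 1) dvd 4 * \<Delta>" by (rule dvd_trans[OF le_imp_power_dvd, rotated]) simp
  then show False
    using power_dvd_iff_le_multiplicity[of "4 * \<Delta>" p "s + 1"] \<open>\<Delta> \<noteq> 0\<close> nunit
    by (simp add: s_def)
qed

lemma card_pairwise_congruent_le:
  fixes A :: "int set" and M N :: int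
  assumes A: "A \<subseteq> {0..<N}" and "N \<ge> 0" and M: "M > 0" "M dvd N"
    and cong: "\<And>x x'. x \<in> A \<Longrightarrow> x' \<in> A \<Longrightarrow> M dvd x - x'"
  shows "int (card A) * M \<le> N"
proof -
  have "inj_on (\<lambda>x. x div M) A"
  proof (rule inj_onI)
    fix x x' assume "x \<in> A" "x' \<in> A" "x div M = x' div M"
    moreover have "x mod M = x' mod M" using cong[OF \<open>x \<in> A\<close> \<open>x' \<in> A\<close>] by (simp add: mod_eq_dvd_iff)
    ultimately show "x = x'" by (metis div_mult_mod_eq)
  qed
  moreover have "(\<lambda>x. x div M) ` A \<subseteq> {0..<N div M}"
  proof clarify
    fix x assume "x \<in> A"
    then have x: "0 \<le> x" "x < M * (N div M)" using A M by auto
    have "M * (x div M) \<le> x" using M(1) pos_mod_sign[of M x] mult_div_mod_eq[of M x] by linarith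
    then have "M * (x div M) < M * (N div M)" using x by linarith
    then show "x div M \<in> {0..<N div M}"
      using x M(1) by (simp add: pos_imp_zdiv_nonneg_iff mult_less_cancel_left_pos)
  qed
  ultimately have "card A \<le> nat (N div M)"
    by (metis card_image card_mono finite_atLeastLessThan_int card_atLeastLessThan_int diff_zero)
  moreover have "N div M \<ge> 0" using \<open>N \<ge> 0\<close> M by (simp add: pos_imp_zdiv_nonneg_iff)
  ultimately have "int (card A) \<le> N div M" by linarith
  then show ?thesis using M by (metis dvd_div_mult_self mult_right_mono less_imp_le)
qed

lemma qf_mult_fst_coeff: "a * qf a b c x y = (a*x + b*y)^2 - (b^2 - a*c) * y^2"
  unfolding qf_def by (simp add: algebra_simps power2_eq_square)

lemma qf_swap: "qf c b a y x = qf a b c x y"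
  unfolding qf_def by (simp add: algebra_simps)

lemma res_form_mult_y_cube:
  fixes a1 b1 c1 a2 b2 c2 x y :: int
  defines "A \<equiv> a1*c2 - a2*c1" and "B \<equiv> a1*(2*b2) - a2*(2*b1)"
  shows "res_form a1 b1 c1 a2 b2 c2 * y^3 =
           (a2*B*x + (B*(2*b2) - a2*A)*y) * qf a1 b1 c1 x y
         + ((a1*A - (2*b1)*B)*y - a1*B*x) * qf a2 b2 c2 x y"
  unfolding res_form_def qf_def A_def B_def by algebra

lemma res_form_mult_x_cube:
  fixes a1 b1 c1 a2 b2 c2 x y :: int
  defines "A \<equiv> a1*c2 - a2*c1" and "C \<equiv> (2*b1)*c2 - (2*b2)*c1"
  shows "res_form a1 b1 c1 a2 b2 c2 * x^3 =
           ((c2*A - C*(2*b2))*x - c2*C*y) * qf a1 b1 c1 x y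
         + (c1*C*y + ((2*b1)*C - c1*A)*x) * qf a2 b2 c2 x y"
  unfolding res_form_def qf_def A_def C_def by algebra

lemma res_form_dvd_if_common_zero:
  fixes m x y :: int
  assumes q1: "m dvd qf a1 b1 c1 x y" and q2: "m dvd qf a2 b2 c2 x y"
    and prim: "coprime (gcd x y) m"
  shows "m dvd res_form a1 b1 c1 a2 b2 c2"
proof -
  let ?R = "res_form a1 b1 c1 a2 b2 c2"
  have "m dvd ?R * x^3"
    unfolding res_form_mult_x_cube[where y = y] using q1 q2 by (intro dvd_add dvd_mult)
  moreover have "m dvd ?R * y^3"
    unfolding res_form_mult_y_cube[where x = x] using q1 q2 by (intro dvd_add dvd_mult)
  ultimately have "m dvd gcd (?R * x^3) (?R * y^3)" by simp
  also have "gcd (?R * x^3) (?R * y^3) = \<bar>?R\<bar> * gcd x y ^ 3"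
    by (simp add: gcd_mult_left gcd_exp abs_mult)
  finally show ?thesis
    using prim by (simp add: coprime_commute coprime_dvd_mult_left_iff)
qed

lemma card_qf_zeros_fixed_snd_two_classes:
  fixes p a b c y :: int
  assumes p: "prime p" and a: "a \<noteq> 0" and \<Delta>: "(b^2 - a*c) * y^2 \<noteq> 0" and "e \<le> E"
  defines "s \<equiv> multiplicity p (4 * ((b^2 - a*c) * y^2))"
  shows "int (card {x \<in> {0..<p^E}. p^e dvd qf a b c x y}) * p^(e - s) \<le> 2 * p^E"
proof -
  define n where "n = e + multiplicity p a"
  define M where "M = p ^ (e - s)"
  define X where "X = {x \<in> {0..<p^E}. p^e dvd qf a b c x y}"
  define near where "near t = {x \<in> X. p ^ (n - s) dvd (a*x + b*y) - t}" for t
  have p_pos: "p > 0" using p by (simp add: prime_gt_0_int)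
  have "M > 0" "M dvd p^E" using p_pos \<open>e \<le> E\<close> by (auto simp: M_def le_imp_power_dvd)
  have root: "p ^ n dvd (a*x + b*y)^2 - (b^2 - a*c) * y^2" if "x \<in> X" for x
  proof -
    have "p^e * p^(multiplicity p a) dvd qf a b c x y * a"
      using that by (intro mult_dvd_mono) (auto simp: X_def multiplicity_dvd)
    then show ?thesis by (simp add: n_def power_add mult.commute[of _ a] qf_mult_fst_coeff)
  qed
  have fin_near: "finite (near t)" for t
    by (rule finite_subset[of _ "{0..<p^E}"]) (auto simp: near_def X_def)
  have card_near: "int (card (near t)) * M \<le> p^E" for t
  proof (rule card_pairwise_congruent_le)
    fix x x' assume "x \<in> near t" "x' \<in> near t"
    then have "p ^ (n - s) dvd ((a*x + b*y) - t) - ((a*x' + b*y) - t)"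
      unfolding near_def by (blast intro: dvd_diff)
    then have "p ^ (n - s) dvd a * (x - x')" by (simp add: algebra_simps)
    then have "p ^ (n - s - multiplicity p a) dvd x - x'"
      using p a by (rule prime_power_dvd_mult_imp_dvd[rotated 2])
    then show "M dvd x - x'" by (simp add: M_def n_def)
  qed (use \<open>M > 0\<close> \<open>M dvd p^E\<close> p_pos in \<open>auto simp: near_def X_def\<close>)
  have "int (card X) * M \<le> 2 * p^E"
  proof (cases "X = {}")
    case False
    then obtain x0 where "x0 \<in> X" by blast
    let ?u0 = "a*x0 + b*y"
    have "X \<subseteq> near ?u0 \<union> near (- ?u0)"
      using prime_power_dvd_square_roots[OF p \<Delta> root root[OF \<open>x0 \<in> X\<close>]]
      by (auto simp: near_def s_def)
    then have "card X \<le> card (near ?u0) + card (near (- ?u0))"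
      by (intro le_trans[OF card_mono card_Un_le]) (simp_all add: fin_near)
    then have "int (card X) * M \<le> (int (card (near ?u0)) + int (card (near (- ?u0)))) * M"
      using \<open>M > 0\<close> by (intro mult_right_mono) auto
    also have "\<dots> \<le> 2 * p^E"
      using card_near[of ?u0] card_near[of "- ?u0"] by (simp add: distrib_right)
    finally show ?thesis .
  qed (use p_pos in simp)
  then show ?thesis by (simp add: X_def M_def)
qed

lemma card_qf_zeros_fixed_snd:
  fixes p a b c y :: int
  assumes p: "prime p" and a: "a \<noteq> 0" and d: "b^2 - a*c \<noteq> 0" and y: "\<not> p dvd y"
    and "e \<le> E"
  shows "int (card {x \<in> {0..<p^E}. p^e dvd qf a b c x y}) * p^e \<le> 8 * \<bar>b^2 - a*c\<bar> * p^E"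
proof -
  define s where "s = multiplicity p (4 * ((b^2 - a*c) * y^2))"
  define X where "X = {x \<in> {0..<p^E}. p^e dvd qf a b c x y}"
  have p_pos: "p > 0" using p by (simp add: prime_gt_0_int)
  have card_X: "int (card X) * p^(e - s) \<le> 2 * p^E"
    unfolding X_def s_def using d y by (intro card_qf_zeros_fixed_snd_two_classes p a \<open>e \<le> E\<close>) auto
  have pe: "p^e \<le> p^(e - s) * p^s"
  proof -
    have "p^e \<le> p^(e - s + s)" using p by (intro power_increasing) (auto simp: prime_ge_1_int)
    then show ?thesis by (simp add: power_add)
  qed
  have ps: "p^s \<le> 4 * \<bar>b^2 - a*c\<bar>"
  proof -
    have "p^s dvd 4 * (b^2 - a*c) * y^2"
      using multiplicity_dvd[of p "4 * ((b^2 - a*c) * y^2)"] unfolding s_def by (simp only: mult.assoc)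
    moreover have "coprime (p^s) (y^2)" using p y by (simp add: prime_imp_coprime)
    ultimately have "p^s dvd 4 * (b^2 - a*c)" using coprime_dvd_mult_left_iff by blast
    then have "\<bar>p^s\<bar> \<le> \<bar>4 * (b^2 - a*c)\<bar>" using d by (intro dvd_imp_le_int) auto
    then show ?thesis unfolding abs_mult using p_pos by simp
  qed
  have "int (card X) * p^e \<le> int (card X) * (p^(e - s) * p^s)" using pe by (intro mult_left_mono) auto
  also have "\<dots> = (int (card X) * p^(e - s)) * p^s" by (simp only: mult.assoc)
  also have "\<dots> \<le> (2 * p^E) * (4 * \<bar>b^2 - a*c\<bar>)"
    by (rule mult_mono[OF card_X ps]) (use p_pos in auto)
  finally show ?thesis by (simp add: X_def mult_ac)
qed

lemma card_qf_zeros_snd_coprime: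
  fixes p a b c :: int
  assumes p: "prime p" and a: "a \<noteq> 0" and d: "b^2 - a*c \<noteq> 0" and "e \<le> E"
  shows "int (card {(x, y) \<in> {0..<p^E} \<times> {0..<p^E}. p^e dvd qf a b c x y \<and> \<not> p dvd y}) * p^e
           \<le> 8 * \<bar>b^2 - a*c\<bar> * (p^E)^2"
proof -
  define Y where "Y = {y \<in> {0..<p^E}. \<not> p dvd y}"
  define X where "X y = {x \<in> {0..<p^E}. p^e dvd qf a b c x y}" for y
  have p_pos: "p > 0" using p by (simp add: prime_gt_0_int)
  have fin: "finite Y" "finite (X y)" for y
    by (rule finite_subset[of _ "{0..<p^E}"]; auto simp: Y_def X_def)+
  have "{(x, y) \<in> {0..<p^E} \<times> {0..<p^E}. p^e dvd qf a b c x y \<and> \<not> p dvd y}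
          = prod.swap ` (SIGMA y:Y. X y)"
    by (auto simp: Y_def X_def image_iff)
  then have "card {(x, y) \<in> {0..<p^E} \<times> {0..<p^E}. p^e dvd qf a b c x y \<and> \<not> p dvd y}
               = (\<Sum>y\<in>Y. card (X y))"
    by (simp add: card_image card_SigmaI fin)
  then have "int (card {(x, y) \<in> {0..<p^E} \<times> {0..<p^E}. p^e dvd qf a b c x y \<and> \<not> p dvd y}) * p^e
               = (\<Sum>y\<in>Y. int (card (X y)) * p^e)"
    by (simp add: sum_distrib_right)
  also have "\<dots> \<le> (\<Sum>y\<in>Y. 8 * \<bar>b^2 - a*c\<bar> * p^E)"
    unfolding X_def using card_qf_zeros_fixed_snd[OF p a d _ \<open>e \<le> E\<close>]
    by (intro sum_mono) (simp add: Y_def)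
  also have "\<dots> = int (card Y) * (8 * \<bar>b^2 - a*c\<bar> * p^E)" by simp
  also have "\<dots> \<le> p^E * (8 * \<bar>b^2 - a*c\<bar> * p^E)"
  proof (rule mult_right_mono)
    have "card Y \<le> card {0..<p^E}" by (intro card_mono) (auto simp: Y_def)
    then show "int (card Y) \<le> p^E" using p_pos by (simp add: le_nat_iff)
  qed (use p_pos in simp)
  finally show ?thesis by (simp add: power2_eq_square mult_ac)
qed

lemma card_primitive_qf_zeros:
  fixes p a b c :: int
  assumes p: "prime p" and "a \<noteq> 0" "c \<noteq> 0" "b^2 - a*c \<noteq> 0" "e \<le> E"
  shows "int (card {(x, y) \<in> {0..<p^E} \<times> {0..<p^E}. p^e dvd qf a b c x y \<and> \<not> (p dvd x \<and> p dvd y)})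
           * p^e \<le> 16 * \<bar>b^2 - a*c\<bar> * (p^E)^2"
proof -
  define Z where "Z a b c = {(x, y) \<in> {0..<p^E} \<times> {0..<p^E}. p^e dvd qf a b c x y \<and> \<not> p dvd y}"
    for a b c
  let ?S = "{(x, y) \<in> {0..<p^E} \<times> {0..<p^E}. p^e dvd qf a b c x y \<and> \<not> (p dvd x \<and> p dvd y)}"
  have "finite (Z a b c)" "finite (Z c b a)"
    by (rule finite_subset[of _ "{0..<p^E} \<times> {0..<p^E}"]; auto simp: Z_def)+
  moreover have "?S \<subseteq> Z a b c \<union> prod.swap ` Z c b a"
    by (auto simp: Z_def qf_swap image_iff)
  ultimately have "card ?S \<le> card (Z a b c \<union> prod.swap ` Z c b a)"
    by (intro card_mono) auto
  also have "\<dots> \<le> card (Z a b c) + card (prod.swap ` Z c b a)"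
    by (rule card_Un_le)
  also have "\<dots> = card (Z a b c) + card (Z c b a)"
    by (simp add: card_image)
  finally have "int (card ?S) * p^e \<le> (int (card (Z a b c)) + int (card (Z c b a))) * p^e"
    using p by (intro mult_right_mono) (auto simp: prime_ge_0_int)
  also have "\<dots> \<le> 8 * \<bar>b^2 - a*c\<bar> * (p^E)^2 + 8 * \<bar>b^2 - a*c\<bar> * (p^E)^2"
    unfolding distrib_right
  proof (rule add_mono)
    show "int (card (Z a b c)) * p^e \<le> 8 * \<bar>b^2 - a*c\<bar> * (p^E)^2"
      unfolding Z_def using assms by (intro card_qf_zeros_snd_coprime)
    show "int (card (Z c b a)) * p^e \<le> 8 * \<bar>b^2 - a*c\<bar> * (p^E)^2"
      unfolding Z_def using card_qf_zeros_snd_coprime[of p c b a e E] assms by (simp add: mult.commute)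
  qed
  finally show ?thesis by (simp add: mult_ac)
qed

lemma disc_form_eq: "disc_form a b c = 4 * (b^2 - a*c)"
  unfolding disc_form_def by (simp add: algebra_simps power2_eq_square)

lemma res_form_sym: "res_form a1 b1 c1 a2 b2 c2 = res_form a2 b2 c2 a1 b1 c1"
  unfolding res_form_def by algebra

lemma coeffs_disc_dvd_D_const:
  "k < g \<Longrightarrow> a k * c k * disc_form (a k) (b k) (c k) dvd D_const g a b c"
  unfolding D_const_def by (intro dvd_mult dvd_mult2 dvd_prodI) auto

lemma res_form_dvd_D_const:
  assumes "i < g" "j < g" "i \<noteq> j"
  shows "res_form (a i) (b i) (c i) (a j) (b j) (c j) dvd D_const g a b c"
proof -
  have fin: "finite {(i, j). i < j \<and> j < g}"
    by (rule finite_subset[of _ "{..<g} \<times> {..<g}"]) auto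
  have "res_form (a i) (b i) (c i) (a j) (b j) (c j) dvd D_const g a b c" if "i < j" "j < g" for i j
    unfolding D_const_def using that
    by (intro dvd_mult dvd_prodI[OF fin, of "(i, j)" "\<lambda>(i, j). res_form (a i) (b i) (c i) (a j) (b j) (c j)", simplified])
       auto
  then show ?thesis
    using assms res_form_sym by (metis linorder_neqE_nat)
qed

lemma form_nondegenerate_if_D_const_nonzero:
  assumes "D_const g a b c \<noteq> 0" "k < g"
  shows "a k \<noteq> 0" "c k \<noteq> 0" "b k ^ 2 - a k * c k \<noteq> 0"
    and "\<bar>b k ^ 2 - a k * c k\<bar> \<le> \<bar>D_const g a b c\<bar>"
proof -
  have dvd: "a k * c k * (4 * (b k ^ 2 - a k * c k)) dvd D_const g a b c"
    using coeffs_disc_dvd_D_const[OF assms(2)] by (simp add: disc_form_eq)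
  then show "a k \<noteq> 0" "c k \<noteq> 0" "b k ^ 2 - a k * c k \<noteq> 0"
    using assms(1) by auto
  from dvd have "b k ^ 2 - a k * c k dvd D_const g a b c"
    by (meson dvd_mult_right dvd_trans dvd_triv_right)
  then show "\<bar>b k ^ 2 - a k * c k\<bar> \<le> \<bar>D_const g a b c\<bar>"
    using assms(1) by (simp add: dvd_imp_le_int)
qed

definition rho_set :: "nat \<Rightarrow> (nat \<Rightarrow> int) \<Rightarrow> (nat \<Rightarrow> int) \<Rightarrow> (nat \<Rightarrow> int) \<Rightarrow> int \<Rightarrow> (nat \<Rightarrow> nat)
    \<Rightarrow> (int \<times> int) set" where
  "rho_set g a b c p e =
     {(x, y) \<in> {0..<p ^ (\<Sum>i<g. e i)} \<times> {0..<p ^ (\<Sum>i<g. e i)}.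
        (\<forall>i<g. p ^ e i dvd qf (a i) (b i) (c i) x y) \<and> coprime (gcd x y) (p ^ (\<Sum>i<g. e i))}"

lemma rho_star_prime_powers: "rho_star g a b c (\<lambda>i. p ^ e i) = card (rho_set g a b c (int p) e)"
  unfolding rho_star_def rho_set_def Let_def by (simp add: power_sum coprime_iff_gcd_eq_1)

lemma common_divisor_le_D_const:
  fixes m x y :: int
  assumes "D_const g a b c \<noteq> 0" "i < g" "j < g" "i \<noteq> j"
    and "m dvd qf (a i) (b i) (c i) x y" "m dvd qf (a j) (b j) (c j) x y" "coprime (gcd x y) m"
  shows "\<bar>m\<bar> \<le> \<bar>D_const g a b c\<bar>"
proof -
  have "m dvd res_form (a i) (b i) (c i) (a j) (b j) (c j)"
    using assms(5-7) by (rule res_form_dvd_if_common_zero)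
  also have "\<dots> dvd D_const g a b c" using assms(2-4) by (rule res_form_dvd_D_const)
  finally show ?thesis using assms(1) by (simp add: dvd_imp_le_int)
qed

lemma rho_set_modulus_le:
  fixes p :: int
  assumes D: "D_const g a b c \<noteq> 0" and p: "prime p" and j: "j < g" "\<forall>i<g. e i \<le> e j"
    and xy: "(x, y) \<in> rho_set g a b c p e"
  shows "p ^ (\<Sum>i<g. e i) \<le> \<bar>D_const g a b c\<bar> ^ (g - 1) * p ^ e j"
proof -
  have p_pos: "p > 0" using p by (simp add: prime_gt_0_int)
  have small: "p ^ e i \<le> \<bar>D_const g a b c\<bar>" if i: "i < g" "i \<noteq> j" for i
  proof -
    have "p ^ e i dvd p ^ e j" using i j by (simp add: le_imp_power_dvd)
    moreover have "p ^ e i dvd p ^ (\<Sum>i<g. e i)"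
      using i by (intro le_imp_power_dvd member_le_sum) auto
    ultimately show ?thesis
      using xy i j p_pos common_divisor_le_D_const[OF D i(1) j(1) i(2), of "p ^ e i" x y]
      by (auto simp: rho_set_def intro: dvd_trans coprime_imp_coprime)
  qed
  have "p ^ (\<Sum>i<g. e i) = p ^ e j * (\<Prod>i\<in>{..<g} - {j}. p ^ e i)"
    using j(1) by (simp add: sum.remove[of "{..<g}" j] power_add power_sum)
  also have "\<dots> \<le> p ^ e j * (\<Prod>i\<in>{..<g} - {j}. \<bar>D_const g a b c\<bar>)"
    using small p_pos by (intro mult_left_mono prod_mono) auto
  also have "\<dots> = \<bar>D_const g a b c\<bar> ^ (g - 1) * p ^ e j"
    using j(1) by simp
  finally show ?thesis .
qed

lemma card_rho_set_le:
  fixes p :: int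
  assumes D: "D_const g a b c \<noteq> 0" and p: "prime p" and j: "j < g" "\<forall>i<g. e i \<le> e j"
    and "e j > 0"
  shows "int (card (rho_set g a b c p e)) * p ^ e j \<le> 16 * \<bar>D_const g a b c\<bar> * (p ^ (\<Sum>i<g. e i))^2"
proof -
  define E where "E = (\<Sum>i<g. e i)"
  have "e j \<le> E" unfolding E_def using j by (intro member_le_sum) auto
  let ?T = "{(x, y) \<in> {0..<p^E} \<times> {0..<p^E}.
             p ^ e j dvd qf (a j) (b j) (c j) x y \<and> \<not> (p dvd x \<and> p dvd y)}"
  have "rho_set g a b c p e \<subseteq> ?T"
  proof
    fix z assume z: "z \<in> rho_set g a b c p e"
    obtain x y where [simp]: "z = (x, y)" by fastforce
    have "\<not> (p dvd x \<and> p dvd y)"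
    proof
      assume "p dvd x \<and> p dvd y"
      then have "p dvd gcd x y" "p dvd p ^ E" using \<open>e j > 0\<close> \<open>e j \<le> E\<close> by (auto intro: dvd_power)
      then show False
        using z p by (auto simp: rho_set_def E_def dest: coprime_common_divisor not_prime_unit)
    qed
    then show "z \<in> ?T" using z j by (auto simp: rho_set_def E_def)
  qed
  then have "card (rho_set g a b c p e) \<le> card ?T"
    by (rule card_mono[rotated]) (rule finite_subset[of _ "{0..<p^E} \<times> {0..<p^E}"]; auto)
  then have "int (card (rho_set g a b c p e)) * p ^ e j \<le> int (card ?T) * p ^ e j"
    using p by (intro mult_right_mono) (auto simp: prime_ge_0_int)
  also have "\<dots> \<le> 16 * \<bar>b j ^ 2 - a j * c j\<bar> * (p ^ E)^2"
    using form_nondegenerate_if_D_const_nonzero[OF D j(1)]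
    by (intro card_primitive_qf_zeros p \<open>e j \<le> E\<close>)
  also have "\<dots> \<le> 16 * \<bar>D_const g a b c\<bar> * (p ^ E)^2"
    using form_nondegenerate_if_D_const_nonzero[OF D j(1)] by (intro mult_right_mono) auto
  finally show ?thesis by (simp add: E_def)
qed

lemma rho_star_prime_powers_le:
  assumes D: "D_const g a b c \<noteq> 0" and "g \<ge> 1" and p: "prime p"
  shows "int (rho_star g a b c (\<lambda>i. p ^ e i))
           \<le> 16 * \<bar>D_const g a b c\<bar> ^ (2 * g - 1) * int p ^ Max (e ` {..<g})"
proof -
  define S where "S = rho_set g a b c (int p) e"
  define C where "C = 16 * \<bar>D_const g a b c\<bar> ^ (2 * g - 1)"
  have "Max (e ` {..<g}) \<in> e ` {..<g}" using \<open>g \<ge> 1\<close> by (intro Max_in) (auto simp: lessThan_empty_iff)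
  then obtain j where j: "j < g" "e j = Max (e ` {..<g})" by auto
  have max: "\<forall>i<g. e i \<le> e j" using j by simp
  have p_pos: "int p > 0" using p by (simp add: prime_gt_0_nat)
  have "1 \<le> \<bar>D_const g a b c\<bar> ^ (2 * g - 1)" using D by (simp add: one_le_power)
  then have C: "C \<ge> 1" by (simp add: C_def)
  have "int (card S) \<le> C * int p ^ e j"
  proof (cases "e j = 0")
    case True
    then have "S \<subseteq> {0..<1} \<times> {0..<1}" using max by (auto simp: S_def rho_set_def)
    then have "card S \<le> 1" using card_mono[of "{0..<1::int} \<times> {0..<1::int}" S] by simp
    then show ?thesis using C True by simp
  next
    case False
    show ?thesis
    proof (cases "S = {}")
      case False
      then obtain x y where "(x, y) \<in> S" by auto
      then have N: "int p ^ (\<Sum>i<g. e i) \<le> \<bar>D_const g a b c\<bar> ^ (g - 1) * int p ^ e j"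
        using rho_set_modulus_le[OF D _ j(1) max] p by (simp add: S_def)
      have "int (card S) * int p ^ e j \<le> 16 * \<bar>D_const g a b c\<bar> * (int p ^ (\<Sum>i<g. e i))^2"
        using card_rho_set_le[OF D _ j(1) max] p \<open>e j \<noteq> 0\<close> by (simp add: S_def)
      also have "\<dots> \<le> 16 * \<bar>D_const g a b c\<bar> * (\<bar>D_const g a b c\<bar> ^ (g - 1) * int p ^ e j)^2"
        using N p_pos by (intro mult_left_mono power_mono) auto
      also have "\<dots> = (C * int p ^ e j) * int p ^ e j"
      proof -
        have "2 * g - 1 = Suc ((g - 1) * 2)" using \<open>g \<ge> 1\<close> by simp
        then show ?thesis
          unfolding C_def by (simp only: power_Suc power_mult power_mult_distrib power2_eq_square mult_ac)
      qed
      finally show ?thesis using p_pos by simp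
    qed (use C p_pos in simp)
  qed
  then show ?thesis using j by (simp add: S_def C_def rho_star_prime_powers)
qed

lemma rho_star_prime_powers_eq_0:
  assumes p: "prime p" and nd: "\<not> int p dvd D_const g a b c"
    and ij: "i < g" "j < g" "i \<noteq> j" and e: "e i > 0" "e j > 0"
  shows "rho_star g a b c (\<lambda>i. p ^ e i) = 0"
proof -
  have "rho_set g a b c (int p) e = {}"
  proof (rule equals0I)
    fix z assume z: "z \<in> rho_set g a b c (int p) e"
    obtain x y where [simp]: "z = (x, y)" by fastforce
    have "e i \<le> (\<Sum>i<g. e i)" using ij by (intro member_le_sum) auto
    then have "coprime (gcd x y) (int p)"
      using z e by (auto simp: rho_set_def)
    moreover have "int p dvd qf (a k) (b k) (c k) x y" if "k < g" "e k > 0" for k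
      using z that by (auto simp: rho_set_def intro: dvd_trans[OF dvd_power[of "e k"]])
    ultimately have "int p dvd res_form (a i) (b i) (c i) (a j) (b j) (c j)"
      using ij e by (intro res_form_dvd_if_common_zero) auto
    then show False using nd res_form_dvd_D_const[OF ij] dvd_trans by blast
  qed
  then show ?thesis by (simp add: rho_star_prime_powers)
qed

theorem lemma2p3:
  fixes g :: nat and a b c :: "nat \<Rightarrow> int"
  assumes "g \<ge> 2"
    and "\<And>i. i < g \<Longrightarrow> form_irreducible (a i) (b i) (c i)"
    and "\<And>i. i < g \<Longrightarrow> a i mod 4 = 1"
    and "D_const g a b c \<noteq> 0"
  shows "(\<exists>C::real. \<forall>p::nat. \<forall>e::nat \<Rightarrow> nat. prime p \<longrightarrow>
            real (rho_star g a b c (\<lambda>i. p ^ e i)) \<le> C * real p ^ Max (e ` {..<g}))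
       \<and> (\<forall>p::nat. \<forall>e::nat \<Rightarrow> nat. prime p \<longrightarrow> \<not> int p dvd D_const g a b c \<longrightarrow>
            (\<exists>i<g. \<exists>j<g. i \<noteq> j \<and> e i > 0 \<and> e j > 0) \<longrightarrow>
            rho_star g a b c (\<lambda>i. p ^ e i) = 0)"
proof
  let ?C = "16 * \<bar>D_const g a b c\<bar> ^ (2 * g - 1)"
  show "\<exists>C::real. \<forall>p::nat. \<forall>e::nat \<Rightarrow> nat. prime p \<longrightarrow>
          real (rho_star g a b c (\<lambda>i. p ^ e i)) \<le> C * real p ^ Max (e ` {..<g})"
  proof (intro exI[of _ "of_int ?C"] allI impI)
    fix p :: nat and e :: "nat \<Rightarrow> nat"
    assume "prime p"
    then have "int (rho_star g a b c (\<lambda>i. p ^ e i)) \<le> ?C * int p ^ Max (e ` {..<g})"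
      using assms(1,4) by (intro rho_star_prime_powers_le) auto
    then have "real_of_int (int (rho_star g a b c (\<lambda>i. p ^ e i)))
                 \<le> real_of_int (?C * int p ^ Max (e ` {..<g}))"
      by (simp only: of_int_le_iff)
    then show "real (rho_star g a b c (\<lambda>i. p ^ e i)) \<le> of_int ?C * real p ^ Max (e ` {..<g})"
      by simp
  qed
  show "\<forall>p::nat. \<forall>e::nat \<Rightarrow> nat. prime p \<longrightarrow> \<not> int p dvd D_const g a b c \<longrightarrow>
          (\<exists>i<g. \<exists>j<g. i \<noteq> j \<and> e i > 0 \<and> e j > 0) \<longrightarrow>
          rho_star g a b c (\<lambda>i. p ^ e i) = 0"
    using rho_star_prime_powers_eq_0 by blast
qed

end
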